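(* Let $\mathcal X,\mathcal Y$ be Hilbert spaces and $\mathbf A\colon\mathcal X\to\mathcal Y$ a bounded linear operator with singular value decomposition $\mathbf Ax=\sum_{n\in\mathbb N}\sigma_n\langle u_n,x\rangle v_n$, where $(u_n)$, $(v_n)$ are orthonormal systems in $\mathcal X$, $\mathcal Y$ and $\sigma_n>0$. Let $\mathbf B_\alpha(y)=\sum_{\sigma_n^2\ge\alpha}\sigma_n^{-1}\langle y,v_n\rangle u_n$ be truncated SVD, let $(\mathbf U_{\theta(\alpha)})_{\alpha>0}$ be maps $\mathcal X\to\mathcal X$, and define $$\nu_{\theta(\alpha)}(z)\coloneqq(\mathrm{Id}_{\mathcal X}-\mathbf B_\alpha\mathbf A)\mathbf U_{\theta(\alpha)}(z)=\sum_{\sigma_n^2<\alpha}\langle\mathbf U_{\theta(\alpha)}z,u_n\rangle u_n,\qquad \mathbf R_\alpha(y_\delta)\coloneqq(\mathrm{Id}_{\mathcal X}+\nu_{\theta(\alpha)})\mathbf B_\alpha(y_\delta).$$ Let $\mathrm{Id}_{\mathcal X}+\mathbf N$ be a null space network, $\mathcal M\coloneqq(\mathrm{Id}_{\mathcal X}+\mathbf N)(\operatorname{ran}(\mathbf A^{+}))$, and assume $(\nu_{\theta(\alpha)})_{\alpha>0}$ is $((\mathbf B_\alpha)_{\alpha>0},\mathbf N)$-adapted. Let $\rho,\mu>0$ and assume $d_\alpha(x;\rho,\mu)=\mathcal O(\alpha^\mu)$ for all $x$ in some set $\mathcal M_{\rho,\mu}\subseteq\mathcal M$. Then, provided $\alpha\asymp\delta^{2/(2\mu+1)}$,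 for all $x\in\mathcal M_{\rho,\mu}$ and $y_\delta\in\mathcal Y$ with $\|\mathbf Ax-y_\delta\|\le\delta$ we have $\|\mathbf R_\alpha(y_\delta)-x\|=\mathcal O(\delta^{2\mu/(2\mu+1)})$ as $\alpha\to0$.
   Context: $\mathbf A^{+}$ is the Moore–Penrose inverse, $\operatorname{ran}(\mathbf A^{+})=\ker(\mathbf A)^\perp$. A null space network is $\mathrm{Id}_{\mathcal X}+\mathbf N$ with $\mathbf N=\mathbf P_{\ker(\mathbf A)}\mathbf U$, $\mathbf P_{\ker(\mathbf A)}$ the orthogonal projection onto $\ker(\mathbf A)$ and $\mathbf U\colon\mathcal X\to\mathcal X$ Lipschitz. A family of Lipschitz maps $\nu_{\theta(\alpha)}\colon\mathcal X\to\mathcal X$ is $((\mathbf B_\alpha),\mathbf N)$-adapted if $\nu_{\theta(\alpha)}(\mathbf B_\alpha\mathbf Az)\to\mathbf N(z)$ as $\alpha\to0$ for all $z\in\operatorname{ran}(\mathbf A^{+})$ and all Lipschitz constants are bounded by some $L>0$. Distance function: $d_\alpha(x;\rho,\mu)\coloneqq\inf\{\|x-\nu_{\theta(\alpha)}\mathbf B_\alpha\mathbf Ax-(\mathbf A^*\mathbf A)^\mu\omega\|:\omega\in\mathcal X,\ \|\omega\|\le\rho\}$. *)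

theory Defs
  imports "HOL-Analysis.Analysis"
begin

definition orthonormal_seq :: "(nat \<Rightarrow> 'a::real_inner) \<Rightarrow> bool" where
  "orthonormal_seq u \<longleftrightarrow> (\<forall>m n. u m \<bullet> u n = (if m = n then 1 else 0))"

definition ker_op :: "('a \<Rightarrow> 'b::real_vector) \<Rightarrow> 'a set" where
  "ker_op A = {x. A x = 0}"

definition orth_compl :: "'a::real_inner set \<Rightarrow> 'a set" where
  "orth_compl K = {z. \<forall>k\<in>K. z \<bullet> k = 0}"

definition orth_proj :: "'a::real_inner set \<Rightarrow> 'a \<Rightarrow> 'a" where
  "orth_proj K x = (THE p. p \<in> K \<and> x - p \<in> orth_compl K)"

definition tsvd :: "(nat \<Rightarrow> real) \<Rightarrow> (nat \<Rightarrow> 'a::{real_inner,complete_space})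
    \<Rightarrow> (nat \<Rightarrow> 'b::real_inner) \<Rightarrow> real \<Rightarrow> 'b \<Rightarrow> 'a" where
  "tsvd \<sigma> u v \<alpha> y = infsum (\<lambda>n. (inverse (\<sigma> n) * (y \<bullet> v n)) *\<^sub>R u n) {n. \<alpha> \<le> (\<sigma> n)\<^sup>2}"

text \<open>Fractional power (A^* A)^mu via the singular system:
  (A^* A)^mu w = sum_n sigma_n^(2 mu) <w,u_n> u_n  (mu > 0).\<close>
definition svd_pow :: "(nat \<Rightarrow> real) \<Rightarrow> (nat \<Rightarrow> 'a::{real_inner,complete_space})
    \<Rightarrow> real \<Rightarrow> 'a \<Rightarrow> 'a" where
  "svd_pow \<sigma> u \<mu> \<omega> = infsum (\<lambda>n. ((\<sigma> n) powr (2 * \<mu>) * (\<omega> \<bullet> u n)) *\<^sub>R u n) UNIV"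

text \<open>nu_theta(alpha)(z) = (Id - B_alpha A) U_theta(alpha)(z); U alpha stands for U_theta(alpha).\<close>
definition nu_op :: "('a \<Rightarrow> 'b) \<Rightarrow> (nat \<Rightarrow> real) \<Rightarrow> (nat \<Rightarrow> 'a::{real_inner,complete_space})
    \<Rightarrow> (nat \<Rightarrow> 'b::real_inner) \<Rightarrow> (real \<Rightarrow> 'a \<Rightarrow> 'a) \<Rightarrow> real \<Rightarrow> 'a \<Rightarrow> 'a" where
  "nu_op A \<sigma> u v U \<alpha> z = U \<alpha> z - tsvd \<sigma> u v \<alpha> (A (U \<alpha> z))"

definition R_op :: "('a \<Rightarrow> 'b) \<Rightarrow> (nat \<Rightarrow> real) \<Rightarrow> (nat \<Rightarrow> 'a::{real_inner,complete_space})
    \<Rightarrow> (nat \<Rightarrow> 'b::real_inner) \<Rightarrow> (real \<Rightarrow> 'a \<Rightarrow> 'a) \<Rightarrow> real \<Rightarrow> 'b \<Rightarrow> 'a" where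
  "R_op A \<sigma> u v U \<alpha> y = tsvd \<sigma> u v \<alpha> y + nu_op A \<sigma> u v U \<alpha> (tsvd \<sigma> u v \<alpha> y)"

definition null_space_network :: "('a \<Rightarrow> 'b::real_vector) \<Rightarrow> ('a::real_inner \<Rightarrow> 'a) \<Rightarrow> bool" where
  "null_space_network A N \<longleftrightarrow>
     (\<exists>U0 C. C-lipschitz_on UNIV U0 \<and> (\<forall>x. N x = orth_proj (ker_op A) (U0 x)))"

definition adapted :: "('a \<Rightarrow> 'b::real_vector) \<Rightarrow> (real \<Rightarrow> 'b \<Rightarrow> 'a)
    \<Rightarrow> (real \<Rightarrow> 'a \<Rightarrow> 'a) \<Rightarrow> ('a::real_inner \<Rightarrow> 'a) \<Rightarrow> bool" where
  "adapted A B \<nu> N \<longleftrightarrow>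
     (\<forall>z \<in> orth_compl (ker_op A). ((\<lambda>\<alpha>. \<nu> \<alpha> (B \<alpha> (A z))) \<longlongrightarrow> N z) (at_right 0))
     \<and> (\<exists>L>0. \<forall>\<alpha>>0. L-lipschitz_on UNIV (\<nu> \<alpha>))"

definition dist_fun :: "('a \<Rightarrow> 'b) \<Rightarrow> (nat \<Rightarrow> real) \<Rightarrow> (nat \<Rightarrow> 'a::{real_inner,complete_space})
    \<Rightarrow> (nat \<Rightarrow> 'b::real_inner) \<Rightarrow> (real \<Rightarrow> 'a \<Rightarrow> 'a) \<Rightarrow> real \<Rightarrow> 'a \<Rightarrow> real \<Rightarrow> real \<Rightarrow> real" where
  "dist_fun A \<sigma> u v U \<alpha> x \<rho> \<mu> =
     Inf {norm (x - nu_op A \<sigma> u v U \<alpha> (tsvd \<sigma> u v \<alpha> (A x)) - svd_pow \<sigma> u \<mu> \<omega>) | \<omega>. norm \<omega> \<le> \<rho>}"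

end

theory Submission
  imports Defs
begin

text \<open>
  On the span of the singular vectors with \<open>\<sigma>\<^sub>n\<^sup>2 \<ge> \<alpha>\<close> the truncated SVD inverts \<open>A\<close>, and
  \<open>B\<^sub>\<alpha> A\<close> is the orthogonal projection \<open>Q\<^sub>\<alpha>\<close> onto it, which \<open>\<nu>\<^sub>\<alpha> = (Id - Q\<^sub>\<alpha>) U\<^sub>\<alpha>\<close> annihilates.
  Hence \<open>R\<^sub>\<alpha> y - x\<close> splits into a data error, at most \<open>(1 + L) \<delta> / \<surd>\<alpha>\<close> because \<open>\<parallel>B\<^sub>\<alpha>\<parallel> \<le> 1/\<surd>\<alpha>\<close>
  and \<open>\<nu>\<^sub>\<alpha>\<close> is \<open>L\<close>-Lipschitz, and the approximation error \<open>(Id - Q\<^sub>\<alpha>)(x - \<nu>\<^sub>\<alpha> B\<^sub>\<alpha> A x)\<close>.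
  Inserting any source term \<open>(A\<^sup>*A)\<^sup>\<mu> \<omega>\<close>, \<open>\<parallel>\<omega>\<parallel> \<le> \<rho>\<close>, bounds the latter by \<open>d\<^sub>\<alpha>(x; \<rho>, \<mu>) + \<alpha>\<^sup>\<mu> \<rho>\<close>,
  since \<open>Id - Q\<^sub>\<alpha>\<close> is a contraction and only keeps the components with \<open>\<sigma>\<^sub>n\<^sup>2 < \<alpha>\<close> of
  \<open>(A\<^sup>*A)\<^sup>\<mu> \<omega>\<close>. The choice \<open>\<alpha> \<asymp> \<delta>\<^bsup>2/(2\<mu>+1)\<^esup>\<close> balances \<open>\<delta>/\<surd>\<alpha>\<close> against \<open>\<alpha>\<^sup>\<mu>\<close>.
\<close>

lemma infsum_diff:
  fixes f g :: "'i \<Rightarrow> 'a::real_normed_vector"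
  assumes "f summable_on A" "g summable_on A"
  shows "(\<Sum>\<^sub>\<infinity>x\<in>A. f x - g x) = infsum f A - infsum g A"
  using infsum_add[OF assms(1), of "\<lambda>x. - g x"] assms(2)
  by (simp add: infsum_uminus summable_on_uminus)

lemma summable_on_Cauchy:
  fixes f :: "'i \<Rightarrow> 'a::{real_normed_vector,complete_space}"
  assumes "\<And>e. e > 0 \<Longrightarrow> \<exists>F0. finite F0 \<and> F0 \<subseteq> A \<and>
             (\<forall>F. finite F \<and> F \<subseteq> A \<and> F \<inter> F0 = {} \<longrightarrow> norm (sum f F) < e)"
  shows "f summable_on A"
proof -
  have cauchy: "cauchy_filter (filtermap (sum f) (finite_subsets_at_top A))"
  proof (subst cauchy_filter_metric_filtermap, intro allI impI)
    fix e :: real assume "e > 0"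
    then obtain F0 where F0: "finite F0" "F0 \<subseteq> A"
      "\<And>F. finite F \<Longrightarrow> F \<subseteq> A \<Longrightarrow> F \<inter> F0 = {} \<Longrightarrow> norm (sum f F) < e/2"
      using assms[of "e/2"] by (meson half_gt_zero)
    let ?P = "\<lambda>X. finite X \<and> F0 \<subseteq> X \<and> X \<subseteq> A"
    have tail: "sum f X = sum f (X - F0) + sum f F0" "norm (sum f (X - F0)) < e/2" if "?P X" for X
      using sum.subset_diff[of F0 X f] F0(3)[of "X - F0"] that by auto
    have "dist (sum f X) (sum f Y) < e" if "?P X" "?P Y" for X Y
      using tail[OF that(1)] tail[OF that(2)]
        norm_triangle_ineq4[of "sum f (X - F0)" "sum f (Y - F0)"]
      by (simp add: dist_norm)
    moreover have "eventually ?P (finite_subsets_at_top A)"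
      unfolding eventually_finite_subsets_at_top using F0 by blast
    ultimately show "\<exists>P. eventually P (finite_subsets_at_top A) \<and>
        (\<forall>X Y. P X \<and> P Y \<longrightarrow> dist (sum f X) (sum f Y) < e)"
      by (intro exI[of _ ?P]) blast
  qed
  have "filtermap (sum f) (finite_subsets_at_top A) \<noteq> bot"
    by (simp add: filtermap_bot_iff)
  then obtain s where "filtermap (sum f) (finite_subsets_at_top A) \<le> nhds s"
    using cauchy_filter_complete_converges[OF cauchy complete_UNIV] by auto
  then show ?thesis
    by (auto simp: summable_on_def has_sum_def filterlim_def)
qed

lemma norm_infsum_le_finite_sums:
  fixes f :: "'i \<Rightarrow> 'a::real_normed_vector"
  assumes "\<And>F. finite F \<Longrightarrow> F \<subseteq> A \<Longrightarrow> norm (sum f F) \<le> B"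
  shows "norm (infsum f A) \<le> B"
proof (cases "f summable_on A")
  case True
  then have "((\<lambda>F. norm (sum f F)) \<longlongrightarrow> norm (infsum f A)) (finite_subsets_at_top A)"
    by (intro tendsto_norm) (simp add: has_sum_def[symmetric] has_sum_infsum)
  moreover have "eventually (\<lambda>F. norm (sum f F) \<le> B) (finite_subsets_at_top A)"
    unfolding eventually_finite_subsets_at_top using assms by blast
  ultimately show ?thesis
    by (intro tendsto_upperbound) auto
next
  case False
  then show ?thesis using assms[of "{}"] by (simp add: infsum_not_exists)
qed

lemma inner_sum_orthonormal:
  assumes "orthonormal_seq u" "finite F"
  shows "(\<Sum>n\<in>F. c n *\<^sub>R u n) \<bullet> u m = (if m \<in> F then c m else 0)"
proof -
  have "(\<Sum>n\<in>F. c n *\<^sub>R u n) \<bullet> u m = (\<Sum>n\<in>F. if n = m then c m else 0)"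
    using assms(1) by (auto simp: inner_sum_left orthonormal_seq_def intro: sum.cong)
  then show ?thesis using assms(2) by simp
qed

lemma norm_sum_orthonormal:
  assumes "orthonormal_seq u" "finite F"
  shows "(norm (\<Sum>n\<in>F. c n *\<^sub>R u n))\<^sup>2 = (\<Sum>n\<in>F. (c n)\<^sup>2)"
proof -
  have "(norm (\<Sum>n\<in>F. c n *\<^sub>R u n))\<^sup>2 = (\<Sum>m\<in>F. c m * ((\<Sum>n\<in>F. c n *\<^sub>R u n) \<bullet> u m))"
    by (simp add: power2_norm_eq_inner inner_sum_right)
  then show ?thesis
    using inner_sum_orthonormal[OF assms] by (simp add: power2_eq_square)
qed

lemma bessel_inequality_finite:
  assumes "orthonormal_seq u" "finite F"
  shows "(\<Sum>n\<in>F. (x \<bullet> u n)\<^sup>2) \<le> (norm x)\<^sup>2"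
proof -
  define s where "s = (\<Sum>n\<in>F. (x \<bullet> u n) *\<^sub>R u n)"
  have ss: "s \<bullet> s = (\<Sum>n\<in>F. (x \<bullet> u n)\<^sup>2)"
    using norm_sum_orthonormal[OF assms, of "\<lambda>n. x \<bullet> u n"] by (simp add: s_def power2_norm_eq_inner)
  have xs: "x \<bullet> s = (\<Sum>n\<in>F. (x \<bullet> u n)\<^sup>2)"
    by (simp add: s_def inner_sum_right power2_eq_square)
  have "0 \<le> (x - s) \<bullet> (x - s)" by simp
  also have "\<dots> = x \<bullet> x - 2 * (x \<bullet> s) + s \<bullet> s"
    by (simp add: inner_diff_left inner_diff_right inner_commute)
  finally show ?thesis using ss xs by (simp add: power2_norm_eq_inner)
qed

lemma summable_on_orthonormal:
  fixes u :: "nat \<Rightarrow> 'a::{real_inner,complete_space}"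
  assumes u: "orthonormal_seq u"
    and bounded: "\<And>F. finite F \<Longrightarrow> F \<subseteq> A \<Longrightarrow> (\<Sum>n\<in>F. (c n)\<^sup>2) \<le> K"
  shows "(\<lambda>n. c n *\<^sub>R u n) summable_on A"
proof (rule summable_on_Cauchy)
  fix e :: real assume e: "e > 0"
  have "(\<lambda>n. (c n)\<^sup>2) summable_on A"
    by (rule nonneg_bdd_above_summable_on) (use bounded in \<open>auto intro!: bdd_aboveI\<close>)
  then have sq: "((\<lambda>n. (c n)\<^sup>2) has_sum (\<Sum>\<^sub>\<infinity>n\<in>A. (c n)\<^sup>2)) A"
    by (rule has_sum_infsum)
  obtain F0 where F0: "finite F0" "F0 \<subseteq> A"
    "dist (\<Sum>n\<in>F0. (c n)\<^sup>2) (\<Sum>\<^sub>\<infinity>n\<in>A. (c n)\<^sup>2) \<le> e\<^sup>2 / 2"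
    using has_sum_finite_approximation[OF sq, of "e\<^sup>2 / 2"] e by auto
  have "norm (\<Sum>n\<in>F. c n *\<^sub>R u n) < e" if F: "finite F" "F \<subseteq> A" "F \<inter> F0 = {}" for F
  proof -
    have "(\<Sum>n\<in>F. (c n)\<^sup>2) + (\<Sum>n\<in>F0. (c n)\<^sup>2) \<le> (\<Sum>\<^sub>\<infinity>n\<in>A. (c n)\<^sup>2)"
      using finite_sum_le_has_sum[OF sq, of "F \<union> F0"] F F0 by (simp add: sum.union_disjoint)
    moreover have "e\<^sup>2 > 0" using e by simp
    ultimately have "(\<Sum>n\<in>F. (c n)\<^sup>2) < e\<^sup>2"
      using F0(3) unfolding dist_real_def by arith
    then have "(norm (\<Sum>n\<in>F. c n *\<^sub>R u n))\<^sup>2 < e\<^sup>2"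
      by (simp only: norm_sum_orthonormal[OF u F(1)])
    then show ?thesis by (rule power2_less_imp_less) (use e in simp)
  qed
  then show "\<exists>F0. finite F0 \<and> F0 \<subseteq> A \<and>
      (\<forall>F. finite F \<and> F \<subseteq> A \<and> F \<inter> F0 = {} \<longrightarrow> norm (\<Sum>n\<in>F. c n *\<^sub>R u n) < e)"
    using F0 by blast
qed

lemma orthonormal_series_dominated:
  fixes u :: "nat \<Rightarrow> 'a::{real_inner,complete_space}" and e :: "nat \<Rightarrow> 'b::real_inner"
  assumes u: "orthonormal_seq u" and e: "orthonormal_seq e" and "K \<ge> 0"
    and dominated: "\<And>n. n \<in> A \<Longrightarrow> \<bar>c n\<bar> \<le> K * \<bar>z \<bullet> e n\<bar>"
  shows "(\<lambda>n. c n *\<^sub>R u n) summable_on A"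
    and "norm (\<Sum>\<^sub>\<infinity>n\<in>A. c n *\<^sub>R u n) \<le> K * norm z"
proof -
  have sq: "(\<Sum>n\<in>F. (c n)\<^sup>2) \<le> (K * norm z)\<^sup>2" if F: "finite F" "F \<subseteq> A" for F
  proof -
    have "(\<Sum>n\<in>F. (c n)\<^sup>2) \<le> (\<Sum>n\<in>F. K\<^sup>2 * (z \<bullet> e n)\<^sup>2)"
    proof (rule sum_mono)
      fix n assume "n \<in> F"
      then have "\<bar>c n\<bar>\<^sup>2 \<le> (K * \<bar>z \<bullet> e n\<bar>)\<^sup>2"
        using F dominated by (intro power_mono) auto
      then show "(c n)\<^sup>2 \<le> K\<^sup>2 * (z \<bullet> e n)\<^sup>2"
        by (simp add: power_mult_distrib)
    qed
    also have "\<dots> \<le> K\<^sup>2 * (norm z)\<^sup>2"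
      unfolding sum_distrib_left[symmetric]
      by (intro mult_left_mono bessel_inequality_finite[OF e F(1)]) auto
    finally show ?thesis by (simp add: power_mult_distrib)
  qed
  then show "(\<lambda>n. c n *\<^sub>R u n) summable_on A"
    by (rule summable_on_orthonormal[OF u])
  show "norm (\<Sum>\<^sub>\<infinity>n\<in>A. c n *\<^sub>R u n) \<le> K * norm z"
  proof (rule norm_infsum_le_finite_sums)
    fix F assume F: "finite F" "F \<subseteq> A"
    then have "(norm (\<Sum>n\<in>F. c n *\<^sub>R u n))\<^sup>2 \<le> (K * norm z)\<^sup>2"
      using sq by (simp only: norm_sum_orthonormal[OF u F(1)])
    then show "norm (\<Sum>n\<in>F. c n *\<^sub>R u n) \<le> K * norm z"
      by (rule power2_le_imp_le) (use \<open>K \<ge> 0\<close> in simp)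
  qed
qed

lemma inner_infsum_left:
  fixes f :: "'i \<Rightarrow> 'a::real_inner"
  assumes "f summable_on A"
  shows "infsum f A \<bullet> w = (\<Sum>\<^sub>\<infinity>n\<in>A. f n \<bullet> w)"
  using has_sum_bounded_linear[OF bounded_linear_inner_left has_sum_infsum[OF assms], of w]
  by (simp add: infsumI)

lemma inner_infsum_orthonormal:
  assumes "orthonormal_seq u" "(\<lambda>n. c n *\<^sub>R u n) summable_on A"
  shows "(\<Sum>\<^sub>\<infinity>n\<in>A. c n *\<^sub>R u n) \<bullet> u m = (if m \<in> A then c m else 0)"
proof -
  have "(\<Sum>\<^sub>\<infinity>n\<in>A. c n *\<^sub>R u n) \<bullet> u m = (\<Sum>\<^sub>\<infinity>n\<in>A. (c n *\<^sub>R u n) \<bullet> u m)"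
    by (rule inner_infsum_left[OF assms(2)])
  also have "\<dots> = (\<Sum>\<^sub>\<infinity>n\<in>A \<inter> {m}. c n)"
    using assms(1) by (intro infsum_cong_neutral) (auto simp: orthonormal_seq_def)
  finally show ?thesis by (cases "m \<in> A") auto
qed

definition ons_proj :: "(nat \<Rightarrow> 'a::real_inner) \<Rightarrow> nat set \<Rightarrow> 'a \<Rightarrow> 'a" where
  "ons_proj u S z = (\<Sum>\<^sub>\<infinity>n\<in>S. (z \<bullet> u n) *\<^sub>R u n)"

context
  fixes u :: "nat \<Rightarrow> 'a::{real_inner,complete_space}"
  assumes u: "orthonormal_seq u"
begin

lemma summable_on_ons_proj: "(\<lambda>n. (z \<bullet> u n) *\<^sub>R u n) summable_on S"
  by (rule orthonormal_series_dominated(1)[OF u u, of 1]) auto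

lemma inner_ons_proj: "ons_proj u S z \<bullet> u m = (if m \<in> S then z \<bullet> u m else 0)"
  unfolding ons_proj_def by (rule inner_infsum_orthonormal[OF u summable_on_ons_proj])

lemma ons_proj_diff: "ons_proj u S (a - b) = ons_proj u S a - ons_proj u S b"
  unfolding ons_proj_def
  by (simp add: inner_diff_left scaleR_diff_left infsum_diff[OF summable_on_ons_proj summable_on_ons_proj])

lemma ons_proj_idem: "ons_proj u S (ons_proj u S z) = ons_proj u S z"
proof -
  have "ons_proj u S (ons_proj u S z) = (\<Sum>\<^sub>\<infinity>n\<in>S. (z \<bullet> u n) *\<^sub>R u n)"
    unfolding ons_proj_def[of u S "ons_proj u S z"] by (rule infsum_cong) (simp add: inner_ons_proj)
  then show ?thesis by (simp add: ons_proj_def)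
qed

lemma norm_diff_ons_proj_le: "norm (z - ons_proj u S z) \<le> norm z"
proof -
  define Q where "Q = ons_proj u S z"
  have inner_Q: "Q \<bullet> w = (\<Sum>\<^sub>\<infinity>n\<in>S. (z \<bullet> u n) * (u n \<bullet> w))" for w
    unfolding Q_def ons_proj_def by (simp add: inner_infsum_left[OF summable_on_ons_proj])
  have "u n \<bullet> Q = u n \<bullet> z" if "n \<in> S" for n
    using inner_ons_proj[of S z n] that by (simp add: Q_def inner_commute)
  then have QQ: "Q \<bullet> Q = Q \<bullet> z"
    unfolding inner_Q by (intro infsum_cong) simp
  have "(norm (z - Q))\<^sup>2 = (norm z)\<^sup>2 - 2 * (Q \<bullet> z) + Q \<bullet> Q"
    by (simp add: power2_norm_eq_inner inner_diff_left inner_diff_right inner_commute[of z Q])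
  also have "\<dots> \<le> (norm z)\<^sup>2"
    using QQ inner_ge_zero[of Q] by linarith
  finally show ?thesis unfolding Q_def by (rule power2_le_imp_le) simp
qed

lemma diff_ons_proj_infsum:
  assumes "(\<lambda>n. c n *\<^sub>R u n) summable_on UNIV"
  shows "(\<Sum>\<^sub>\<infinity>n. c n *\<^sub>R u n) - ons_proj u S (\<Sum>\<^sub>\<infinity>n. c n *\<^sub>R u n) = (\<Sum>\<^sub>\<infinity>n\<in>-S. c n *\<^sub>R u n)"
proof -
  define s where "s = (\<Sum>\<^sub>\<infinity>n. c n *\<^sub>R u n)"
  have coeff: "s \<bullet> u n = c n" for n
    unfolding s_def using inner_infsum_orthonormal[OF u assms] by simp
  have summable: "(\<lambda>n. c n *\<^sub>R u n) summable_on B" for B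
    using summable_on_ons_proj[of s B] by (simp add: coeff)
  have "s = (\<Sum>\<^sub>\<infinity>n\<in>S \<union> -S. c n *\<^sub>R u n)" by (simp add: s_def)
  also have "\<dots> = ons_proj u S s + (\<Sum>\<^sub>\<infinity>n\<in>-S. c n *\<^sub>R u n)"
    unfolding ons_proj_def coeff by (rule infsum_Un_disjoint[OF summable summable]) auto
  finally show ?thesis unfolding s_def[symmetric] by (metis add_diff_cancel_left')
qed

end

lemma norm_svd_pow_residual_le:
  fixes u :: "nat \<Rightarrow> 'a::{real_inner,complete_space}"
  assumes u: "orthonormal_seq u" and "\<And>n. \<sigma> n > 0" "\<alpha> > 0" "\<mu> \<ge> 0"
  shows "norm (svd_pow \<sigma> u \<mu> \<omega> - ons_proj u {n. \<alpha> \<le> (\<sigma> n)\<^sup>2} (svd_pow \<sigma> u \<mu> \<omega>))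
           \<le> \<alpha> powr \<mu> * norm \<omega>"
proof (cases "(\<lambda>n. (\<sigma> n powr (2 * \<mu>) * (\<omega> \<bullet> u n)) *\<^sub>R u n) summable_on UNIV")
  case True
  have "\<bar>\<sigma> n powr (2 * \<mu>) * (\<omega> \<bullet> u n)\<bar> \<le> \<alpha> powr \<mu> * \<bar>\<omega> \<bullet> u n\<bar>"
    if "n \<in> - {n. \<alpha> \<le> (\<sigma> n)\<^sup>2}" for n
  proof -
    have "\<sigma> n powr (2 * \<mu>) = ((\<sigma> n)\<^sup>2) powr \<mu>"
      using assms(2)[of n] by (simp add: powr_powr[symmetric] powr_realpow)
    also have "\<dots> \<le> \<alpha> powr \<mu>"
      using that assms(4) by (intro powr_mono2) auto
    finally show ?thesis by (simp add: abs_mult mult_right_mono)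
  qed
  then have "norm (\<Sum>\<^sub>\<infinity>n\<in>- {n. \<alpha> \<le> (\<sigma> n)\<^sup>2}. (\<sigma> n powr (2 * \<mu>) * (\<omega> \<bullet> u n)) *\<^sub>R u n)
      \<le> \<alpha> powr \<mu> * norm \<omega>"
    by (intro orthonormal_series_dominated(2)[OF u u]) auto
  then show ?thesis
    unfolding svd_pow_def diff_ons_proj_infsum[OF u True] .
next
  case False
  \<comment> \<open>then \<open>svd_pow \<sigma> u \<mu> \<omega> = 0\<close>, the junk value of a divergent \<open>infsum\<close>\<close>
  then show ?thesis
    by (simp add: svd_pow_def infsum_not_exists ons_proj_def)
qed

locale singular_system =
  fixes A :: "'a::{real_inner,complete_space} \<Rightarrow> 'b::{real_inner,complete_space}"
    and \<sigma> :: "nat \<Rightarrow> real" and u :: "nat \<Rightarrow> 'a" and v :: "nat \<Rightarrow> 'b"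
  assumes u_on: "orthonormal_seq u" and v_on: "orthonormal_seq v"
    and \<sigma>_pos: "\<And>n. \<sigma> n > 0"
    and svd: "\<And>x. ((\<lambda>n. (\<sigma> n * (u n \<bullet> x)) *\<^sub>R v n) has_sum A x) UNIV"
begin

lemma inner_right_singular_vector: "A z \<bullet> v m = \<sigma> m * (u m \<bullet> z)"
  using inner_infsum_orthonormal[OF v_on has_sum_imp_summable[OF svd], of z m]
  by (simp add: infsumI[OF svd])

lemma tsvd_A_eq_ons_proj: "tsvd \<sigma> u v \<alpha> (A z) = ons_proj u {n. \<alpha> \<le> (\<sigma> n)\<^sup>2} z"
  unfolding tsvd_def ons_proj_def
proof (rule infsum_cong)
  fix n
  have "\<sigma> n \<noteq> 0" using \<sigma>_pos[of n] by simp
  then show "(inverse (\<sigma> n) * (A z \<bullet> v n)) *\<^sub>R u n = (z \<bullet> u n) *\<^sub>R u n"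
    by (simp add: inner_right_singular_vector inner_commute)
qed

lemma tsvd_coeff_le:
  assumes "\<alpha> > 0" "n \<in> {n. \<alpha> \<le> (\<sigma> n)\<^sup>2}"
  shows "\<bar>inverse (\<sigma> n) * c\<bar> \<le> inverse (sqrt \<alpha>) * \<bar>c\<bar>"
proof -
  have "sqrt \<alpha> \<le> \<sigma> n"
    using real_sqrt_le_mono[of \<alpha> "(\<sigma> n)\<^sup>2"] assms(2) \<sigma>_pos[of n] by simp
  then have "inverse (\<sigma> n) \<le> inverse (sqrt \<alpha>)"
    using assms(1) by (intro le_imp_inverse_le) auto
  then show ?thesis
    using \<sigma>_pos[of n] by (simp add: abs_mult mult_right_mono)
qed

lemma summable_on_tsvd:
  assumes "\<alpha> > 0"
  shows "(\<lambda>n. (inverse (\<sigma> n) * (w \<bullet> v n)) *\<^sub>R u n) summable_on {n. \<alpha> \<le> (\<sigma> n)\<^sup>2}"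
  by (rule orthonormal_series_dominated(1)[OF u_on v_on, of "inverse (sqrt \<alpha>)"])
     (use assms tsvd_coeff_le in auto)

lemma norm_tsvd_le:
  assumes "\<alpha> > 0"
  shows "norm (tsvd \<sigma> u v \<alpha> w) \<le> norm w / sqrt \<alpha>"
proof -
  have "norm (tsvd \<sigma> u v \<alpha> w) \<le> inverse (sqrt \<alpha>) * norm w"
    unfolding tsvd_def
    by (rule orthonormal_series_dominated(2)[OF u_on v_on]) (use assms tsvd_coeff_le in auto)
  then show ?thesis by (simp add: divide_inverse mult.commute)
qed

lemma tsvd_diff:
  assumes "\<alpha> > 0"
  shows "tsvd \<sigma> u v \<alpha> (y1 - y2) = tsvd \<sigma> u v \<alpha> y1 - tsvd \<sigma> u v \<alpha> y2"
  unfolding tsvd_def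
  by (simp add: inner_diff_left right_diff_distrib scaleR_diff_left
      infsum_diff[OF summable_on_tsvd[OF assms] summable_on_tsvd[OF assms]])

lemma ons_proj_nu_op: "ons_proj u {n. \<alpha> \<le> (\<sigma> n)\<^sup>2} (nu_op A \<sigma> u v U \<alpha> z) = 0"
  unfolding nu_op_def tsvd_A_eq_ons_proj by (simp add: ons_proj_diff[OF u_on] ons_proj_idem[OF u_on])

lemma norm_approximation_error_le:
  assumes "\<alpha> > 0" "\<mu> \<ge> 0" "\<rho> \<ge> 0"
  shows "norm (x - tsvd \<sigma> u v \<alpha> (A x) - nu_op A \<sigma> u v U \<alpha> (tsvd \<sigma> u v \<alpha> (A x)))
           \<le> dist_fun A \<sigma> u v U \<alpha> x \<rho> \<mu> + \<alpha> powr \<mu> * \<rho>"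
proof -
  define Q where "Q = ons_proj u {n. \<alpha> \<le> (\<sigma> n)\<^sup>2}"
  define z where "z = x - nu_op A \<sigma> u v U \<alpha> (tsvd \<sigma> u v \<alpha> (A x))"
  have source: "norm (z - Q x) \<le> norm (z - svd_pow \<sigma> u \<mu> \<omega>) + \<alpha> powr \<mu> * \<rho>"
    if "norm \<omega> \<le> \<rho>" for \<omega>
  proof -
    define s where "s = svd_pow \<sigma> u \<mu> \<omega>"
    have Q_z: "Q z = Q x"
      by (simp add: z_def Q_def ons_proj_diff[OF u_on] ons_proj_nu_op)
    have "z - Q x = ((z - s) - Q (z - s)) + (s - Q s)"
      unfolding Q_def ons_proj_diff[OF u_on] Q_z[unfolded Q_def] by simp
    also have "norm \<dots> \<le> norm ((z - s) - Q (z - s)) + norm (s - Q s)"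
      by (rule norm_triangle_ineq)
    also have "\<dots> \<le> norm (z - s) + \<alpha> powr \<mu> * norm \<omega>"
      unfolding Q_def s_def
      by (intro add_mono norm_diff_ons_proj_le[OF u_on]
          norm_svd_pow_residual_le[OF u_on \<sigma>_pos assms(1,2)])
    also have "\<dots> \<le> norm (z - s) + \<alpha> powr \<mu> * \<rho>"
      using that by (simp add: mult_left_mono)
    finally show ?thesis unfolding s_def .
  qed
  have "norm (z - Q x) - \<alpha> powr \<mu> * \<rho> \<le> dist_fun A \<sigma> u v U \<alpha> x \<rho> \<mu>"
    unfolding dist_fun_def z_def[symmetric]
  proof (rule cInf_greatest)
    have "norm (0::'a) \<le> \<rho>" using assms(3) by simp
    then show "{norm (z - svd_pow \<sigma> u \<mu> \<omega>) |\<omega>. norm \<omega> \<le> \<rho>} \<noteq> {}" by blast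
  next
    fix d assume "d \<in> {norm (z - svd_pow \<sigma> u \<mu> \<omega>) |\<omega>. norm \<omega> \<le> \<rho>}"
    then show "norm (z - Q x) - \<alpha> powr \<mu> * \<rho> \<le> d"
      using source by force
  qed
  moreover have "x - tsvd \<sigma> u v \<alpha> (A x) - nu_op A \<sigma> u v U \<alpha> (tsvd \<sigma> u v \<alpha> (A x)) = z - Q x"
    by (simp add: z_def Q_def tsvd_A_eq_ons_proj diff_right_commute)
  ultimately show ?thesis by simp
qed

lemma norm_R_op_error_le:
  assumes "\<alpha> > 0" and lip: "L-lipschitz_on UNIV (nu_op A \<sigma> u v U \<alpha>)"
    and "\<mu> \<ge> 0" "\<rho> \<ge> 0" and noise: "norm (A x - y) \<le> \<delta>"
  shows "norm (R_op A \<sigma> u v U \<alpha> y - x)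
           \<le> (1 + L) * (\<delta> / sqrt \<alpha>) + (dist_fun A \<sigma> u v U \<alpha> x \<rho> \<mu> + \<alpha> powr \<mu> * \<rho>)"
proof -
  define B where "B = tsvd \<sigma> u v \<alpha>"
  define \<nu> where "\<nu> = nu_op A \<sigma> u v U \<alpha>"
  have data: "norm (B y - B (A x)) \<le> \<delta> / sqrt \<alpha>"
  proof -
    have "norm (B y - B (A x)) \<le> norm (y - A x) / sqrt \<alpha>"
      unfolding B_def tsvd_diff[OF assms(1), symmetric] by (rule norm_tsvd_le[OF assms(1)])
    also have "\<dots> \<le> \<delta> / sqrt \<alpha>"
      using noise assms(1) by (simp add: norm_minus_commute divide_right_mono)
    finally show ?thesis .
  qed
  have "norm (\<nu> (B y) - \<nu> (B (A x))) \<le> L * norm (B y - B (A x))"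
    using lipschitz_onD[OF lip, of "B y" "B (A x)"] by (simp add: \<nu>_def dist_norm)
  also have "\<dots> \<le> L * (\<delta> / sqrt \<alpha>)"
    using data lipschitz_on_nonneg[OF lip] by (rule mult_left_mono)
  finally have propagated: "norm (\<nu> (B y) - \<nu> (B (A x))) \<le> L * (\<delta> / sqrt \<alpha>)" .
  have "R_op A \<sigma> u v U \<alpha> y - x
      = (B y - B (A x)) + (\<nu> (B y) - \<nu> (B (A x))) - (x - B (A x) - \<nu> (B (A x)))"
    unfolding R_op_def B_def \<nu>_def by (simp add: algebra_simps)
  also have "norm \<dots> \<le> norm (B y - B (A x)) + norm (\<nu> (B y) - \<nu> (B (A x)))
      + norm (x - B (A x) - \<nu> (B (A x)))"
    by (rule order_trans[OF norm_triangle_ineq4 add_right_mono[OF norm_triangle_ineq]])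
  finally have "norm (R_op A \<sigma> u v U \<alpha> y - x) \<le> norm (B y - B (A x))
      + norm (\<nu> (B y) - \<nu> (B (A x))) + norm (x - B (A x) - \<nu> (B (A x)))" .
  moreover have "(1 + L) * (\<delta> / sqrt \<alpha>) = \<delta> / sqrt \<alpha> + L * (\<delta> / sqrt \<alpha>)"
    by (simp only: distrib_right mult_1)
  ultimately show ?thesis
    using data propagated norm_approximation_error_le[OF assms(1,3,4), of x U, folded B_def \<nu>_def]
    by linarith
qed

end

lemma filterlim_parameter_choice:
  fixes \<alpha>c :: "real \<Rightarrow> real"
  assumes "c1 > 0" "p > 0"
    and bounds: "\<forall>\<^sub>F \<delta> in at_right 0. c1 * \<delta> powr p \<le> \<alpha>c \<delta> \<and> \<alpha>c \<delta> \<le> c2 * \<delta> powr p"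
  shows "filterlim \<alpha>c (at_right 0) (at_right 0)"
proof -
  have "((\<lambda>\<delta>::real. \<delta> powr p) \<longlongrightarrow> 0) (at_right 0)"
    by (rule tendsto_zero_powrI[OF tendsto_ident_at tendsto_const _ assms(2)])
       (use eventually_at_right_less[of 0] in \<open>auto elim: eventually_mono\<close>)
  then have lim: "((\<lambda>\<delta>. c * \<delta> powr p) \<longlongrightarrow> 0) (at_right 0)" for c
    by (rule tendsto_mult_right_zero)
  have "(\<alpha>c \<longlongrightarrow> 0) (at_right 0)"
    by (rule tendsto_sandwich[OF _ _ lim lim]) (use bounds in \<open>auto elim: eventually_mono\<close>)
  moreover have "\<forall>\<^sub>F \<delta> in at_right 0. \<alpha>c \<delta> \<in> {0<..} \<and> \<alpha>c \<delta> \<noteq> 0"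
    using bounds eventually_at_right_less[of 0]
  proof eventually_elim
    case (elim \<delta>)
    then have "0 < c1 * \<delta> powr p" using \<open>c1 > 0\<close> by simp
    with elim show ?case by simp
  qed
  ultimately show ?thesis unfolding filterlim_at by blast
qed

lemma parameter_choice_data_rate:
  fixes \<delta> \<alpha> c1 \<mu> :: real
  assumes "\<delta> > 0" "c1 > 0" "\<mu> \<ge> 0"
    and lo: "c1 * \<delta> powr (2 / (2 * \<mu> + 1)) \<le> \<alpha>"
  shows "\<delta> / sqrt \<alpha> \<le> \<delta> powr (2 * \<mu> / (2 * \<mu> + 1)) / sqrt c1"
proof -
  define r q where "r = 1 / (2 * \<mu> + 1)" and "q = 2 * \<mu> / (2 * \<mu> + 1)"
  have "r + q = 1"
    using assms(3) by (simp add: r_def q_def add_divide_distrib[symmetric])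
  then have split: "\<delta> powr r * \<delta> powr q = \<delta>"
    using assms(1) by (simp add: powr_add[symmetric])
  have pos: "0 < sqrt c1 * \<delta> powr r"
    using assms(1,2) by simp
  have "2 / (2 * \<mu> + 1) = 2 * r"
    by (simp add: r_def)
  then have "sqrt c1 * \<delta> powr r = sqrt (c1 * \<delta> powr (2 / (2 * \<mu> + 1)))"
    using assms(1) by (simp add: real_sqrt_mult powr_half_sqrt[symmetric] powr_powr)
  also have "\<dots> \<le> sqrt \<alpha>"
    using lo by simp
  finally have lower: "sqrt c1 * \<delta> powr r \<le> sqrt \<alpha>" .
  moreover have "0 < sqrt \<alpha>"
    using lower pos by linarith
  ultimately have "\<delta> / sqrt \<alpha> \<le> \<delta> / (sqrt c1 * \<delta> powr r)"
    using pos assms(1,2) by (intro divide_left_mono mult_pos_pos) auto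
  also have "\<dots> = \<delta> powr q / sqrt c1"
    using pos by (subst (1) split[symmetric]) (simp add: field_simps)
  finally show ?thesis
    by (simp add: q_def)
qed

lemma parameter_choice_source_rate:
  fixes \<delta> \<alpha> c1 c2 \<mu> :: real
  assumes "\<delta> > 0" "c1 > 0" "\<mu> \<ge> 0"
    and lo: "c1 * \<delta> powr (2 / (2 * \<mu> + 1)) \<le> \<alpha>"
    and hi: "\<alpha> \<le> c2 * \<delta> powr (2 / (2 * \<mu> + 1))"
  shows "\<alpha> powr \<mu> \<le> c2 powr \<mu> * \<delta> powr (2 * \<mu> / (2 * \<mu> + 1))"
proof -
  have "0 < \<delta> powr (2 / (2 * \<mu> + 1))"
    using assms(1) by simp
  moreover have "0 < \<alpha>"
    using lo assms(2) \<open>0 < \<delta> powr (2 / (2 * \<mu> + 1))\<close>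
    by (meson mult_pos_pos order_less_le_trans)
  moreover have "0 < c2 * \<delta> powr (2 / (2 * \<mu> + 1))"
    using \<open>0 < \<alpha>\<close> hi by linarith
  ultimately have "0 < c2"
    using zero_less_mult_pos2 by blast
  have "\<alpha> powr \<mu> \<le> (c2 * \<delta> powr (2 / (2 * \<mu> + 1))) powr \<mu>"
    using hi \<open>0 < \<alpha>\<close> assms(3) by (intro powr_mono2) auto
  also have "\<dots> = c2 powr \<mu> * \<delta> powr (2 * \<mu> / (2 * \<mu> + 1))"
    using \<open>0 < c2\<close> by (simp add: powr_mult powr_powr)
  finally show ?thesis .
qed

lemma convergence_rate_of_parameter_choice:
  fixes \<delta> \<alpha> c1 c2 \<mu> L C D \<rho> e :: real
  assumes "\<delta> > 0" "c1 > 0" "\<mu> \<ge> 0" "L \<ge> 0"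
    and "c1 * \<delta> powr (2 / (2 * \<mu> + 1)) \<le> \<alpha>" "\<alpha> \<le> c2 * \<delta> powr (2 / (2 * \<mu> + 1))"
    and e: "e \<le> (1 + L) * (\<delta> / sqrt \<alpha>) + (D + \<alpha> powr \<mu> * \<rho>)"
    and D: "D \<le> C * \<alpha> powr \<mu>"
  shows "e \<le> ((1 + L) / sqrt c1 + \<bar>C + \<rho>\<bar> * c2 powr \<mu>) * \<delta> powr (2 * \<mu> / (2 * \<mu> + 1))"
proof -
  define q where "q = 2 * \<mu> / (2 * \<mu> + 1)"
  have "(1 + L) * (\<delta> / sqrt \<alpha>) \<le> (1 + L) * (\<delta> powr q / sqrt c1)"
    using parameter_choice_data_rate[OF assms(1-3,5), folded q_def] assms(4)
    by (intro mult_left_mono) auto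
  moreover have "D + \<alpha> powr \<mu> * \<rho> \<le> \<bar>C + \<rho>\<bar> * (c2 powr \<mu> * \<delta> powr q)"
  proof -
    have "D + \<alpha> powr \<mu> * \<rho> \<le> (C + \<rho>) * \<alpha> powr \<mu>"
      using D by (simp add: distrib_right mult.commute)
    also have "\<dots> \<le> \<bar>C + \<rho>\<bar> * \<alpha> powr \<mu>"
      by (intro mult_right_mono) auto
    also have "\<dots> \<le> \<bar>C + \<rho>\<bar> * (c2 powr \<mu> * \<delta> powr q)"
      using parameter_choice_source_rate[OF assms(1-3,5,6), folded q_def]
      by (intro mult_left_mono) auto
    finally show ?thesis .
  qed
  moreover have "((1 + L) / sqrt c1 + \<bar>C + \<rho>\<bar> * c2 powr \<mu>) * \<delta> powr q
      = (1 + L) * (\<delta> powr q / sqrt c1) + \<bar>C + \<rho>\<bar> * (c2 powr \<mu> * \<delta> powr q)"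
    by (simp add: distrib_right)
  ultimately show ?thesis
    using e unfolding q_def[symmetric] by linarith
qed

lemma (in singular_system) eventually_norm_R_op_error_le:
  assumes "\<mu> > 0" "\<rho> \<ge> 0" "c1 > 0"
    and lip: "\<And>\<alpha>. \<alpha> > 0 \<Longrightarrow> L-lipschitz_on UNIV (nu_op A \<sigma> u v U \<alpha>)"
    and rate: "\<forall>\<^sub>F \<alpha> in at_right 0. dist_fun A \<sigma> u v U \<alpha> x \<rho> \<mu> \<le> C * \<alpha> powr \<mu>"
    and choice: "\<forall>\<^sub>F \<delta> in at_right 0.
      c1 * \<delta> powr (2 / (2 * \<mu> + 1)) \<le> \<alpha>c \<delta> \<and> \<alpha>c \<delta> \<le> c2 * \<delta> powr (2 / (2 * \<mu> + 1))"
  shows "\<forall>\<^sub>F \<delta> in at_right 0. \<forall>y. norm (A x - y) \<le> \<delta> \<longrightarrow>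
      norm (R_op A \<sigma> u v U (\<alpha>c \<delta>) y - x)
        \<le> ((1 + L) / sqrt c1 + \<bar>C + \<rho>\<bar> * c2 powr \<mu>) * \<delta> powr (2 * \<mu> / (2 * \<mu> + 1))"
proof -
  have "L \<ge> 0"
    using lipschitz_on_nonneg[OF lip[of 1]] by simp
  have "2 / (2 * \<mu> + 1) > 0"
    using assms(1) by simp
  from eventually_compose_filterlim[OF eventually_conj[OF eventually_at_right_less rate]
      filterlim_parameter_choice[OF \<open>c1 > 0\<close> this choice]]
  show ?thesis
    using choice eventually_at_right_less[of 0]
  proof eventually_elim
    case (elim \<delta>)
    then have "\<alpha>c \<delta> > 0" and "\<delta> > 0"
      and dist: "dist_fun A \<sigma> u v U (\<alpha>c \<delta>) x \<rho> \<mu> \<le> C * \<alpha>c \<delta> powr \<mu>"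
      and lo: "c1 * \<delta> powr (2 / (2 * \<mu> + 1)) \<le> \<alpha>c \<delta>"
      and hi: "\<alpha>c \<delta> \<le> c2 * \<delta> powr (2 / (2 * \<mu> + 1))"
      by simp_all
    show ?case
    proof (intro allI impI)
      fix y assume "norm (A x - y) \<le> \<delta>"
      note error = norm_R_op_error_le[OF \<open>\<alpha>c \<delta> > 0\<close> lip[OF \<open>\<alpha>c \<delta> > 0\<close>] _ \<open>\<rho> \<ge> 0\<close> this]
      show "norm (R_op A \<sigma> u v U (\<alpha>c \<delta>) y - x)
          \<le> ((1 + L) / sqrt c1 + \<bar>C + \<rho>\<bar> * c2 powr \<mu>) * \<delta> powr (2 * \<mu> / (2 * \<mu> + 1))"
        using assms(1) \<open>c1 > 0\<close> \<open>\<delta> > 0\<close> \<open>L \<ge> 0\<close>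
        by (intro convergence_rate_of_parameter_choice[OF _ _ _ _ lo hi error dist]) auto
    qed
  qed
qed

theorem theorem4p2:
  fixes A :: "'a::{real_inner,complete_space} \<Rightarrow> 'b::{real_inner,complete_space}"
    and \<sigma> :: "nat \<Rightarrow> real" and u :: "nat \<Rightarrow> 'a" and v :: "nat \<Rightarrow> 'b"
    and U :: "real \<Rightarrow> 'a \<Rightarrow> 'a" and N :: "'a \<Rightarrow> 'a"
    and \<rho> \<mu> :: real and M\<rho>\<mu> :: "'a set" and \<alpha>c :: "real \<Rightarrow> real"
  assumes A_lin: "bounded_linear A"
    and u_on: "orthonormal_seq u" and v_on: "orthonormal_seq v"
    and \<sigma>_pos: "\<And>n. \<sigma> n > 0"
    and svd: "\<And>x. ((\<lambda>n. (\<sigma> n * (u n \<bullet> x)) *\<^sub>R v n) has_sum A x) UNIV"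
    and nsn: "null_space_network A N"
    and adapt: "adapted A (tsvd \<sigma> u v) (nu_op A \<sigma> u v U) N"
    and \<rho>_pos: "\<rho> > 0" and \<mu>_pos: "\<mu> > 0"
    and M_sub: "M\<rho>\<mu> \<subseteq> (\<lambda>z. z + N z) ` orth_compl (ker_op A)"
    and d_rate: "\<forall>x\<in>M\<rho>\<mu>. \<exists>C. \<forall>\<^sub>F \<alpha> in at_right 0.
                    dist_fun A \<sigma> u v U \<alpha> x \<rho> \<mu> \<le> C * \<alpha> powr \<mu>"
    and param: "\<exists>c1>0. \<exists>c2>0. \<forall>\<^sub>F \<delta> in at_right 0.
                    c1 * \<delta> powr (2 / (2 * \<mu> + 1)) \<le> \<alpha>c \<delta> \<and>
                    \<alpha>c \<delta> \<le> c2 * \<delta> powr (2 / (2 * \<mu> + 1))"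
  shows "\<forall>x\<in>M\<rho>\<mu>. \<exists>C. \<forall>\<^sub>F \<delta> in at_right 0. \<forall>y\<delta>.
           norm (A x - y\<delta>) \<le> \<delta> \<longrightarrow>
           norm (R_op A \<sigma> u v U (\<alpha>c \<delta>) y\<delta> - x) \<le> C * \<delta> powr (2 * \<mu> / (2 * \<mu> + 1))"
proof
  \<comment> \<open>Of \<open>adapt\<close> only the uniform Lipschitz bound enters.\<close>
  fix x assume "x \<in> M\<rho>\<mu>"
  interpret singular_system A \<sigma> u v
    by (rule singular_system.intro) (fact u_on v_on \<sigma>_pos svd)+
  obtain C where rate: "\<forall>\<^sub>F \<alpha> in at_right 0. dist_fun A \<sigma> u v U \<alpha> x \<rho> \<mu> \<le> C * \<alpha> powr \<mu>"
    using d_rate \<open>x \<in> M\<rho>\<mu>\<close> by blast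
  obtain c1 c2 where "c1 > 0" and choice: "\<forall>\<^sub>F \<delta> in at_right 0.
      c1 * \<delta> powr (2 / (2 * \<mu> + 1)) \<le> \<alpha>c \<delta> \<and> \<alpha>c \<delta> \<le> c2 * \<delta> powr (2 / (2 * \<mu> + 1))"
    using param by blast
  obtain L where lip: "\<And>\<alpha>. \<alpha> > 0 \<Longrightarrow> L-lipschitz_on UNIV (nu_op A \<sigma> u v U \<alpha>)"
    using adapt unfolding adapted_def by blast
  show "\<exists>C. \<forall>\<^sub>F \<delta> in at_right 0. \<forall>y\<delta>. norm (A x - y\<delta>) \<le> \<delta> \<longrightarrow>
      norm (R_op A \<sigma> u v U (\<alpha>c \<delta>) y\<delta> - x) \<le> C * \<delta> powr (2 * \<mu> / (2 * \<mu> + 1))"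
    by (rule exI, rule eventually_norm_R_op_error_le[OF \<mu>_pos less_imp_le[OF \<rho>_pos] \<open>c1 > 0\<close>
          lip rate choice])
qed

end
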